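(* Let $(E,\phi)$ be an abelian $t$-module of dimension $d$ over $K$ and $D\in\mathrm{Mat}_{d\times d}(K\{\tau\})$ the matrix representing $\phi_t$ in a fixed coordinate system. Then there exists $n\ge1$ such that, with $s$ the maximal $\tau$-degree of all entries of $D,D^2,\dots,D^n$, the block column matrix with blocks $\sigma^sD,\sigma^sD^2,\dots,\sigma^sD^n$ (stacked vertically, in $\mathrm{Mat}_{nd\times d}(K\{\sigma\})$) has rank $d$ modulo $\sigma^s$.
   Context: $\mathbb{F}_q$ finite field, $K$ perfect field containing $\mathbb{F}_q$, $\ell:\mathbb{F}_q[t]\to K$ an $\mathbb{F}_q$-algebra homomorphism. $K\{\tau\}$: skew polynomials with $\tau\alpha=\alpha^q\tau$, identified with $\mathbb{F}_q$-linear endomorphisms of $\mathbb{G}_a$. $K(\!(\sigma)\!)$: skew Laurent series with $\sigma\alpha=\alpha^{1/q}\sigma$, valuation ring $K[\![\sigma]\!]$, containing $K\{\sigma\}$; $K\{\tau\}\subseteq K(\!(\sigma)\!)$ via $\tau\mapsto\sigma^{-1}$. A $t$-module $(E,\phi)$ of dimension $d$: $\mathbb{F}_q$-vector space scheme $E\cong\mathbb{G}_a^d$ over $K$ with $\mathbb{F}_q$-algebra homomorphism $\phi:\mathbb{F}_q[t]\to\mathrm{End}_{\mathrm{grp},\mathbb{F}_q}(E)$, $d\phi_a-\ell(a)$ nilpotent on $\mathrm{Lie}(E)$; in a fixed coordinate system $\phi_t$ is a matrix $D$ over $K\{\tau\}$. $E$ is abelian if its $t$-motive $\mathrm{Hom}_{\mathrm{grp},\mathbb{F}_q}(E,\mathbb{G}_a)$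 ($K\{\tau\}$ acting by post-composition, $t$ by pre-composition with $\phi_t$) is finitely generated as $K[t]$-module. Rank modulo $\sigma^s$: a matrix $B$ over $K[\![\sigma]\!]$ is diagonalized by elementary row and column operations to non-zero diagonal entries $\sigma^{\nu_1},\dots,\sigma^{\nu_n}$; it has rank $r$ modulo $\sigma^s$ if $\#\{i:\nu_i<s\}=r$. *)

theory Defs
  imports "HOL-Computational_Algebra.Polynomial"
begin

definition perfect_field :: "'k::field itself \<Rightarrow> bool" where
  "perfect_field T \<longleftrightarrow> CHAR('k) = 0 \<or> surj (\<lambda>x::'k. x ^ CHAR('k))"

definition is_subfield :: "'k::field set \<Rightarrow> bool" where
  "is_subfield F \<longleftrightarrow> 0 \<in> F \<and> 1 \<in> F \<and> (\<forall>x\<in>F. \<forall>y\<in>F. x + y \<in> F \<and> x * y \<in> F)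
     \<and> (\<forall>x\<in>F. - x \<in> F) \<and> (\<forall>x\<in>F. x \<noteq> 0 \<longrightarrow> inverse x \<in> F)"

text \<open>Inverse of the q-Frobenius x \<mapsto> x^q (a bijection on a perfect field containing F_q).\<close>
definition frobinv :: "nat \<Rightarrow> 'k::field \<Rightarrow> 'k" where
  "frobinv q = inv (\<lambda>y::'k. y ^ q)"

section \<open>Skew polynomials K{tau}, tau a = a^q tau\<close>

text \<open>An element sum a_i tau^i of K{tau} is represented by the polynomial with coefficients a_i;
  only the multiplication is twisted.\<close>
definition tmult :: "nat \<Rightarrow> 'k::field poly \<Rightarrow> 'k poly \<Rightarrow> 'k poly" where
  "tmult q f g = (\<Sum>i\<le>degree f. \<Sum>j\<le>degree g. monom (coeff f i * (coeff g j) ^ (q ^ i)) (i + j))"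

text \<open>d x d matrices over K{tau}, as functions on indices below d.\<close>
type_synonym 'k tmat = "nat \<Rightarrow> nat \<Rightarrow> 'k poly"

definition tmatmul :: "nat \<Rightarrow> nat \<Rightarrow> 'k::field tmat \<Rightarrow> 'k tmat \<Rightarrow> 'k tmat" where
  "tmatmul q d A B = (\<lambda>i j. \<Sum>l<d. tmult q (A i l) (B l j))"

definition tmat_one :: "'k::field tmat" where
  "tmat_one = (\<lambda>i j. if i = j then 1 else 0)"

fun tmatpow :: "nat \<Rightarrow> nat \<Rightarrow> 'k::field tmat \<Rightarrow> nat \<Rightarrow> 'k tmat" where
  "tmatpow q d D 0 = tmat_one"
| "tmatpow q d D (Suc k) = tmatmul q d (tmatpow q d D k) D"

definition trowmul :: "nat \<Rightarrow> nat \<Rightarrow> (nat \<Rightarrow> 'k::field poly) \<Rightarrow> 'k tmat \<Rightarrow> (nat \<Rightarrow> 'k poly)" where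
  "trowmul q d m A = (\<lambda>j. \<Sum>l<d. tmult q (m l) (A l j))"

definition kmatmul :: "nat \<Rightarrow> (nat \<Rightarrow> nat \<Rightarrow> 'k::field) \<Rightarrow> (nat \<Rightarrow> nat \<Rightarrow> 'k) \<Rightarrow> (nat \<Rightarrow> nat \<Rightarrow> 'k)" where
  "kmatmul d A B = (\<lambda>i j. \<Sum>l<d. A i l * B l j)"

fun kmatpow :: "nat \<Rightarrow> (nat \<Rightarrow> nat \<Rightarrow> 'k::field) \<Rightarrow> nat \<Rightarrow> (nat \<Rightarrow> nat \<Rightarrow> 'k)" where
  "kmatpow d A 0 = (\<lambda>i j. if i = j then 1 else 0)"
| "kmatpow d A (Suc k) = kmatmul d (kmatpow d A k) A"

definition knilpotent :: "nat \<Rightarrow> (nat \<Rightarrow> nat \<Rightarrow> 'k::field) \<Rightarrow> bool" where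
  "knilpotent d A \<longleftrightarrow> (\<exists>N. \<forall>i<d. \<forall>j<d. kmatpow d A N i j = 0)"

text \<open>(G_a^d, phi) with phi_t = D (phi is determined by phi_t since F_q[t] is free on t),
  theta = ell(t).  Condition: d(phi_t) - ell(t) is nilpotent on Lie(E); d(phi_t) is the
  matrix of constant terms of D.\<close>
definition is_tmodule :: "'k::field \<Rightarrow> nat \<Rightarrow> 'k tmat \<Rightarrow> bool" where
  "is_tmodule \<theta> d D \<longleftrightarrow> knilpotent d (\<lambda>i j. coeff (D i j) 0 - (if i = j then \<theta> else 0))"

text \<open>The t-motive M = Hom(E, G_a) = row vectors of length d over K{tau}; K acts by
  left multiplication (post-composition), t by m \<mapsto> m D (pre-composition with phi_t).
  E is abelian iff M is finitely generated as a K[t]-module.\<close>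
definition tmotive_scal :: "'k::field \<Rightarrow> (nat \<Rightarrow> 'k poly) \<Rightarrow> (nat \<Rightarrow> 'k poly)" where
  "tmotive_scal c m = (\<lambda>j. smult c (m j))"

definition is_abelian :: "nat \<Rightarrow> nat \<Rightarrow> 'k::field tmat \<Rightarrow> bool" where
  "is_abelian q d D \<longleftrightarrow>
     (\<exists>gens :: (nat \<Rightarrow> 'k poly) list.
        \<forall>m :: nat \<Rightarrow> 'k poly. \<exists>N (c :: nat \<Rightarrow> nat \<Rightarrow> 'k).
          \<forall>j<d. m j = (\<Sum>g<length gens. \<Sum>k<N.
                          tmotive_scal (c g k) (trowmul q d (gens ! g) (tmatpow q d D k)) j))"

section \<open>Skew power series K[[sigma]], sigma a = a^(1/q) sigma\<close>

type_synonym 'k sser = "nat \<Rightarrow> 'k"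

definition smul :: "nat \<Rightarrow> 'k::field sser \<Rightarrow> 'k sser \<Rightarrow> 'k sser" where
  "smul q a b = (\<lambda>n. \<Sum>i\<le>n. a i * (frobinv q ^^ i) (b (n - i)))"

definition sadd :: "'k::field sser \<Rightarrow> 'k sser \<Rightarrow> 'k sser" where
  "sadd a b = (\<lambda>n. a n + b n)"

definition sone :: "'k::field sser" where
  "sone = (\<lambda>n. if n = 0 then 1 else 0)"

definition szero :: "'k::field sser" where
  "szero = (\<lambda>n. 0)"

definition spow :: "nat \<Rightarrow> 'k::field sser" where
  "spow k = (\<lambda>n. if n = k then 1 else 0)"

definition sunit :: "nat \<Rightarrow> 'k::field sser \<Rightarrow> bool" where
  "sunit q u \<longleftrightarrow> (\<exists>v. smul q u v = sone \<and> smul q v u = sone)"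

type_synonym 'k smat = "nat \<Rightarrow> nat \<Rightarrow> 'k sser"

text \<open>Elementary row operations (row vectors multiplied on the left) and elementary
  column operations (column vectors multiplied on the right) on an m x c matrix.\<close>
inductive selem_reach :: "nat \<Rightarrow> nat \<Rightarrow> nat \<Rightarrow> 'k::field smat \<Rightarrow> 'k smat \<Rightarrow> bool"
  for q m c where
  refl: "selem_reach q m c A A"
| row_add: "selem_reach q m c A B \<Longrightarrow> i < m \<Longrightarrow> j < m \<Longrightarrow> i \<noteq> j \<Longrightarrow>
     selem_reach q m c A (B(i := (\<lambda>k. sadd (B i k) (smul q x (B j k)))))"
| row_swap: "selem_reach q m c A B \<Longrightarrow> i < m \<Longrightarrow> j < m \<Longrightarrow>
     selem_reach q m c A (B(i := B j, j := B i))"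
| row_scale: "selem_reach q m c A B \<Longrightarrow> i < m \<Longrightarrow> sunit q u \<Longrightarrow>
     selem_reach q m c A (B(i := (\<lambda>k. smul q u (B i k))))"
| col_add: "selem_reach q m c A B \<Longrightarrow> i < c \<Longrightarrow> j < c \<Longrightarrow> i \<noteq> j \<Longrightarrow>
     selem_reach q m c A (\<lambda>r. (B r)(i := sadd (B r i) (smul q (B r j) x)))"
| col_swap: "selem_reach q m c A B \<Longrightarrow> i < c \<Longrightarrow> j < c \<Longrightarrow>
     selem_reach q m c A (\<lambda>r. (B r)(i := B r j, j := B r i))"
| col_scale: "selem_reach q m c A B \<Longrightarrow> i < c \<Longrightarrow> sunit q u \<Longrightarrow>
     selem_reach q m c A (\<lambda>r. (B r)(i := smul q (B r i) u))"

text \<open>An m x c matrix B over K[[sigma]] has rank r modulo sigma^s: it can be diagonalized by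
  elementary row and column operations to nonzero diagonal entries sigma^(nu_i), and
  exactly r of the nu_i are below s.\<close>
definition rank_mod_sigma :: "nat \<Rightarrow> nat \<Rightarrow> nat \<Rightarrow> 'k::field smat \<Rightarrow> nat \<Rightarrow> nat \<Rightarrow> bool" where
  "rank_mod_sigma q m c B s r \<longleftrightarrow>
     (\<exists>C \<nu>. selem_reach q m c B C
        \<and> (\<forall>i<m. \<forall>j<c. C i j = (if i = j then spow (\<nu> i) else szero))
        \<and> card {i. i < min m c \<and> \<nu> i < s} = r)"

text \<open>For f = sum a_i tau^i in K{tau} with deg f \<le> s, and tau = sigma^(-1):
  sigma^s f = sum_i a_i^(q^(-s)) sigma^(s-i) \<in> K{sigma}.\<close>
definition sigma_shift :: "nat \<Rightarrow> nat \<Rightarrow> 'k::field poly \<Rightarrow> 'k sser" where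
  "sigma_shift q s f = (\<lambda>n. if n \<le> s then (frobinv q ^^ s) (coeff f (s - n)) else 0)"

definition max_tdeg :: "nat \<Rightarrow> nat \<Rightarrow> 'k::field tmat \<Rightarrow> nat \<Rightarrow> nat" where
  "max_tdeg q d D n = Max (insert 0 {degree (tmatpow q d D k i j) | k i j. 1 \<le> k \<and> k \<le> n \<and> i < d \<and> j < d})"

text \<open>The (n d) x d block column matrix with blocks sigma^s D, ..., sigma^s D^n;
  row k*d + i (k < n, i < d) is row i of sigma^s D^(k+1).\<close>
definition block_col :: "nat \<Rightarrow> nat \<Rightarrow> 'k::field tmat \<Rightarrow> nat \<Rightarrow> nat \<Rightarrow> 'k smat" where
  "block_col q d D n s = (\<lambda>r j. sigma_shift q s (tmatpow q d D (r div d + 1) (r mod d) j))"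

end

theory Submission
  imports
    Defs "HOL-Algebra.Sylow" "HOL-Algebra.Multiplicative_Group"
    "HOL-Combinatorics.Transposition" "HOL-Library.Function_Algebras"
begin

text \<open>
  The q-Frobenius of K is bijective (K is perfect and q is a power of char K), so K[[\<sigma>]] is a
  ring whose units are the series with nonzero constant term. Finite generation of the t-motive
  gives R and n such that every c \<tau>^(R+1) e_l (c \<in> K) is b_0 + b_1 D + ... + b_n D^n with all
  deg b_k \<le> R. Multiplying by \<sigma>^(s+R) exhibits \<sigma>^(s-1) c e_l modulo \<sigma>^s as a left combination
  of the rows of the block column \<sigma>^s D, ..., \<sigma>^s D^n, because \<sigma>^(s+R) b_0 only has terms of
  order \<ge> s. So the rows span the socle \<sigma>^(s-1) K^d of (K[[\<sigma>]]/\<sigma>^s)^d. This property survives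
  elementary row and column operations, and elimination with a pivot of least valuation in the
  remaining block reaches a diagonal matrix diag(\<sigma>^\<nu>_i); spanning the socle forces every
  \<nu>_i < s.
\<close>

section \<open>The q-Frobenius of a perfect field containing F_q\<close>

lemma of_nat_in_subfield: "is_subfield F \<Longrightarrow> of_nat n \<in> F"
  by (induction n) (auto simp: is_subfield_def)

lemma CHAR_pos_if_finite_subfield:
  fixes F :: "'k::field set"
  assumes "is_subfield F" "finite F"
  shows "CHAR('k) > 0"
proof -
  have "range (of_nat :: nat \<Rightarrow> 'k) \<subseteq> F"
    using of_nat_in_subfield[OF assms(1)] by auto
  hence "\<not> inj (of_nat :: nat \<Rightarrow> 'k)"
    using assms(2) finite_subset finite_imageD infinite_UNIV_nat by blast
  then obtain a b where "a < b" "(of_nat a :: 'k) = of_nat b"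
    unfolding inj_def by (metis nat_neq_iff)
  hence "(of_nat (b - a) :: 'k) = 0" "b - a > 0" by simp_all
  thus ?thesis using CHAR_pos_iff by blast
qed

lemma additive_pow_eq:
  fixes G :: "('k::field, 'b) monoid_scheme"
  assumes "monoid.mult G = (+)" "one G = 0"
  shows "x [^]\<^bsub>G\<^esub> n = of_nat n * x"
  by (induction n) (simp_all add: nat_pow_def assms algebra_simps)

text \<open>By Sylow's theorem the additive group of F has a subgroup of order r, and its nonzero
  elements are killed by r.\<close>
lemma prime_dvd_card_finite_subfield_eq_CHAR:
  fixes F :: "'k::field set"
  assumes sf: "is_subfield F" and fin: "finite F" and r: "prime r" "r dvd card F"
  shows "r = CHAR('k)"
proof -
  define G where "G = \<lparr>carrier = F, monoid.mult = (+), one = (0::'k)\<rparr>"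
  have G: "group G"
    by (rule groupI)
      (use sf in \<open>auto simp: G_def is_subfield_def add.assoc intro!: bexI[of _ "- _"]\<close>)
  obtain k where "order G = r ^ 1 * k" using r(2) by (auto simp: order_def G_def)
  then obtain H where H: "subgroup H G" "card H = r"
    using sylow_thm[OF r(1) G, of 1 k] fin by (auto simp: G_def)
  have "finite H"
    using subgroup.subset[OF H(1)] fin finite_subset by (auto simp: G_def)
  moreover have "card H \<ge> 2" using H(2) prime_ge_2_nat[OF r(1)] by simp
  ultimately obtain x where x: "x \<in> H" "x \<noteq> 0"
    using card_mono[of "{0}" H] by fastforce
  interpret HG: group "G\<lparr>carrier := H\<rparr>"
    using subgroup.subgroup_is_group[OF H(1) G] .
  have "x [^]\<^bsub>G\<lparr>carrier := H\<rparr>\<^esub> order (G\<lparr>carrier := H\<rparr>) = \<one>\<^bsub>G\<lparr>carrier := H\<rparr>\<^esub>"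
    using HG.pow_order_eq_1 x by simp
  hence "of_nat r * x = 0"
    by (subst (asm) additive_pow_eq) (simp_all add: G_def order_def H(2))
  hence "CHAR('k) dvd r" using x(2) by (simp add: of_nat_eq_0_iff_char_dvd)
  moreover have "prime CHAR('k)"
    using CHAR_pos_if_finite_subfield[OF sf fin] prime_CHAR_semidom by blast
  ultimately show ?thesis using primes_dvd_imp_eq r(1) by metis
qed

lemma card_finite_subfield_eq_CHAR_power:
  fixes F :: "'k::field set"
  assumes sf: "is_subfield F" and fin: "finite F"
  shows "\<exists>e. card F = CHAR('k) ^ e"
proof (rule ccontr)
  assume "\<nexists>e. card F = CHAR('k) ^ e"
  moreover have "card F \<noteq> 0" using sf fin by (auto simp: is_subfield_def)
  moreover have "prime CHAR('k)"
    using CHAR_pos_if_finite_subfield[OF sf fin] prime_CHAR_semidom by blast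
  ultimately obtain r where "r \<in> prime_factors (card F)" "r \<noteq> CHAR('k)"
    using Ex_other_prime_factor[of "card F" "CHAR('k)"] by auto
  thus False using prime_dvd_card_finite_subfield_eq_CHAR[OF sf fin] by auto
qed

locale bijective_frobenius =
  fixes q :: nat
  assumes frobenius_add: "(x + y :: 'k::field) ^ q = x ^ q + y ^ q"
    and bij_frobenius: "bij (\<lambda>x::'k. x ^ q)"

lemma bijective_frobenius_if_finite_subfield:
  fixes Fq :: "'k::field set"
  assumes sf: "is_subfield Fq" and fin: "finite Fq" and q: "card Fq = q"
    and perfect: "perfect_field TYPE('k)"
  shows "bijective_frobenius TYPE('k) q"
proof
  let ?p = "CHAR('k)"
  have p: "prime ?p"
    using CHAR_pos_if_finite_subfield[OF sf fin] prime_CHAR_semidom by blast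
  obtain e where e: "q = ?p ^ e"
    using card_finite_subfield_eq_CHAR_power[OF sf fin] q by auto
  show add: "(x + y) ^ q = x ^ q + y ^ q" for x y :: 'k
    using freshmans_dream' p e by blast
  have "inj (\<lambda>x::'k. x ^ q)"
  proof (rule injI)
    fix x y :: 'k
    assume "x ^ q = y ^ q"
    hence "(x - y) ^ q = 0" using add[of "x - y" y] by simp
    thus "x = y" by simp
  qed
  moreover have "surj (\<lambda>x::'k. x ^ (?p ^ n))" for n
  proof (induction n)
    case (Suc n)
    have "surj (\<lambda>x::'k. x ^ ?p)"
      using perfect p unfolding perfect_field_def by (auto simp: prime_gt_0_nat)
    hence "surj ((\<lambda>x::'k. x ^ ?p) \<circ> (\<lambda>x. x ^ (?p ^ n)))"
      using Suc by (rule comp_surj[rotated])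
    thus ?case by (simp add: comp_def power_mult[symmetric] mult.commute)
  qed simp
  ultimately show "bij (\<lambda>x::'k. x ^ q)" using e by (simp add: bij_def)
qed

context bijective_frobenius
begin

abbreviation Finv :: "nat \<Rightarrow> 'k \<Rightarrow> 'k" where
  "Finv n \<equiv> frobinv q ^^ n"

lemma q_pos: "q > 0"
proof (rule ccontr)
  assume "\<not> q > 0"
  hence "(0::'k) ^ q = 1 ^ q" by simp
  hence "(0::'k) = 1" by (rule injD[OF bij_is_inj[OF bij_frobenius]])
  thus False by simp
qed

lemma frobinv_power [simp]: "frobinv q ((x::'k) ^ q) = x"
  unfolding frobinv_def using bij_is_inj[OF bij_frobenius] by (rule inv_f_f)

lemma power_frobinv [simp]: "frobinv q (x::'k) ^ q = x"
  unfolding frobinv_def using bij_is_surj[OF bij_frobenius] by (rule surj_f_inv_f)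

lemma frobinv_add: "frobinv q ((x::'k) + y) = frobinv q x + frobinv q y"
proof -
  have "(frobinv q x + frobinv q y) ^ q = x + y" by (simp add: frobenius_add)
  thus ?thesis by (metis frobinv_power)
qed

lemma frobinv_mult: "frobinv q ((x::'k) * y) = frobinv q x * frobinv q y"
proof -
  have "(frobinv q x * frobinv q y) ^ q = x * y" by (simp add: power_mult_distrib)
  thus ?thesis by (metis frobinv_power)
qed

lemma frobinv_0 [simp]: "frobinv q (0::'k) = 0"
  using frobinv_power[of 0] q_pos by (simp add: zero_power)

lemma frobinv_1 [simp]: "frobinv q (1::'k) = 1"
  using frobinv_power[of 1] by simp

lemma Finv_add: "Finv n ((x::'k) + y) = Finv n x + Finv n y"
  by (induction n) (simp_all add: frobinv_add)

lemma Finv_mult: "Finv n ((x::'k) * y) = Finv n x * Finv n y"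
  by (induction n) (simp_all add: frobinv_mult)

lemma Finv_0 [simp]: "Finv n (0::'k) = 0"
  by (induction n) simp_all

lemma Finv_1 [simp]: "Finv n (1::'k) = 1"
  by (induction n) simp_all

lemma Finv_minus: "Finv n (- (x::'k)) = - Finv n x"
  using Finv_add[of n "- x" x] by (simp add: eq_neg_iff_add_eq_0)

lemma Finv_sum: "Finv n (sum (f :: _ \<Rightarrow> 'k) A) = (\<Sum>i\<in>A. Finv n (f i))"
  by (induction A rule: infinite_finite_induct) (simp_all add: Finv_add)

lemma Finv_Finv: "Finv i (Finv j (x::'k)) = Finv (i + j) x"
  by (simp add: funpow_add)

lemma power_Finv [simp]: "Finv n (x::'k) ^ (q ^ n) = x"
  by (induction n arbitrary: x) (simp_all add: power_mult)

lemma Finv_power [simp]: "Finv n ((x::'k) ^ (q ^ n)) = x"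
  by (induction n arbitrary: x) (simp_all add: power_mult)

lemma Finv_eq_0_iff [simp]: "Finv n (x::'k) = 0 \<longleftrightarrow> x = 0"
proof
  assume "Finv n x = 0"
  hence "x = 0 ^ (q ^ n)" using power_Finv[of n x] by simp
  thus "x = 0" using q_pos by simp
qed simp

end

section \<open>The skew power series ring K[[\<sigma>]]\<close>

lemma sum_fun_apply: "(sum f A :: 'a \<Rightarrow> 'b::comm_monoid_add) x = (\<Sum>a\<in>A. f a x)"
  by (induction A rule: infinite_finite_induct) simp_all

lemma sadd_eq_plus: "sadd a b = a + b"
  by (simp add: sadd_def fun_eq_iff)

lemma smul_add_left: "smul q (a + b) (c::'k::field sser) = smul q a c + smul q b c"
  by (simp add: smul_def fun_eq_iff distrib_right sum.distrib)

lemma smul_minus_left: "smul q (- a) (c::'k::field sser) = - smul q a c"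
  by (simp add: smul_def fun_eq_iff sum_negf)

lemma smul_zero_left [simp]: "smul q 0 (c::'k::field sser) = 0"
  by (simp add: smul_def fun_eq_iff)

lemma smul_sum_left: "smul q (sum f A) (c::'k::field sser) = (\<Sum>i\<in>A. smul q (f i) c)"
proof (induction A rule: infinite_finite_induct)
  case (insert x F)
  thus ?case by (simp only: sum.insert[OF insert(1,2)] smul_add_left)
qed (simp_all add: smul_def)

lemma sum_triangle_swap:
  fixes f :: "nat \<Rightarrow> nat \<Rightarrow> nat \<Rightarrow> 'a::comm_monoid_add"
  shows "(\<Sum>j\<le>k. \<Sum>i\<le>j. f i (j - i) (n - j)) = (\<Sum>j\<le>k. \<Sum>i\<le>k - j. f j i (n - j - i))"
  by (induction k) (simp_all add: Suc_diff_le sum.distrib add.assoc)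

context bijective_frobenius
begin

lemma smul_add_right: "smul q a (b + c::'k sser) = smul q a b + smul q a c"
  by (simp add: smul_def fun_eq_iff Finv_add distrib_left sum.distrib)

lemma smul_zero_right [simp]: "smul q a (0::'k sser) = 0"
  by (simp add: smul_def fun_eq_iff)

lemma smul_minus_right: "smul q a (- c::'k sser) = - smul q a c"
  by (simp add: smul_def fun_eq_iff sum_negf Finv_minus)

lemma smul_if_zero_left: "smul q (if P then a else 0) (b::'k sser) = (if P then smul q a b else 0)"
  and smul_if_zero_right: "smul q a (if P then b else 0 :: 'k sser) = (if P then smul q a b else 0)"
  by simp_all

lemma smul_sum_right: "smul q c (sum f A :: 'k sser) = (\<Sum>i\<in>A. smul q c (f i))"
proof (induction A rule: infinite_finite_induct)
  case (insert x F)
  thus ?case by (simp only: sum.insert[OF insert(1,2)] smul_add_right)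
qed (simp_all add: smul_def)

lemma smul_apply_0 [simp]: "smul q a (b::'k sser) 0 = a 0 * b 0"
  by (simp add: smul_def)

lemma smul_eq_0_if_low_right: "(\<And>i. i \<le> n \<Longrightarrow> b i = 0) \<Longrightarrow> smul q a (b::'k sser) n = 0"
  by (simp add: smul_def)

lemma smul_assoc: "smul q (smul q a b) (c::'k sser) = smul q a (smul q b c)"
proof
  fix n
  define f where "f x y z = a x * Finv x (b y) * Finv (x + y) (c z)" for x y z
  have "smul q (smul q a b) c n = (\<Sum>j\<le>n. \<Sum>i\<le>j. f i (j - i) (n - j))"
    by (simp add: smul_def sum_distrib_right f_def)
  also have "\<dots> = (\<Sum>i\<le>n. \<Sum>j\<le>n - i. f i j (n - i - j))"
    by (rule sum_triangle_swap)
  also have "\<dots> = smul q a (smul q b c) n"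
    by (simp add: smul_def sum_distrib_left Finv_sum Finv_mult Finv_Finv mult.assoc f_def)
  finally show "smul q (smul q a b) c n = smul q a (smul q b c) n" .
qed

lemma smul_spow_right: "smul q (a::'k sser) (spow v) n = (if v \<le> n then a (n - v) else 0)"
proof -
  have "smul q a (spow v) n = (\<Sum>i\<le>n. if i = n - v \<and> v \<le> n then a i else 0)"
    unfolding smul_def by (intro sum.cong refl) (auto simp: spow_def)
  thus ?thesis by simp
qed

lemma smul_one_right [simp]: "smul q (a::'k sser) sone = a"
  using smul_spow_right[of a 0] by (simp add: fun_eq_iff sone_def spow_def)

lemma smul_spow_left: "smul q (spow v) (b::'k sser) n = (if v \<le> n then Finv v (b (n - v)) else 0)"
proof -
  have "smul q (spow v) b n = (\<Sum>i\<le>n. if i = v then Finv i (b (n - i)) else 0)"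
    unfolding smul_def by (intro sum.cong refl) (auto simp: spow_def)
  thus ?thesis by simp
qed

lemma smul_one_left [simp]: "smul q sone (b::'k sser) = b"
  using smul_spow_left[of 0 b] by (simp add: fun_eq_iff sone_def spow_def)

function left_inverse :: "'k sser \<Rightarrow> nat \<Rightarrow> 'k" where
  "left_inverse u n =
     (sone n - (\<Sum>i<n. left_inverse u i * Finv i (u (n - i)))) / Finv n (u 0)"
  by auto
termination by (relation "measure snd") auto

declare left_inverse.simps [simp del]

lemma smul_left_inverse: "u 0 \<noteq> 0 \<Longrightarrow> smul q (left_inverse u) (u::'k sser) = sone"
proof
  fix n assume "u 0 \<noteq> 0"
  have "smul q (left_inverse u) u n
      = (\<Sum>i<n. left_inverse u i * Finv i (u (n - i))) + left_inverse u n * Finv n (u 0)"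
    by (simp add: smul_def lessThan_Suc_atMost[symmetric])
  also have "left_inverse u n * Finv n (u 0)
      = sone n - (\<Sum>i<n. left_inverse u i * Finv i (u (n - i)))"
    using \<open>u 0 \<noteq> 0\<close> by (subst left_inverse.simps) simp
  finally show "smul q (left_inverse u) u n = sone n" by simp
qed

lemma sunit_iff: "sunit q (u::'k sser) \<longleftrightarrow> u 0 \<noteq> 0"
proof
  assume "sunit q u"
  then obtain v where "smul q u v = sone" unfolding sunit_def by blast
  hence "u 0 * v 0 = 1" by (metis smul_apply_0 sone_def)
  thus "u 0 \<noteq> 0" by auto
next
  assume u0: "u 0 \<noteq> 0"
  define w where "w = left_inverse u"
  have wu: "smul q w u = sone" unfolding w_def using u0 by (rule smul_left_inverse)
  hence "w 0 * u 0 = 1" by (metis smul_apply_0 sone_def)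
  hence "smul q (left_inverse w) w = sone" by (intro smul_left_inverse) auto
  hence "smul q u w = sone"
    using wu by (metis smul_assoc smul_one_left)
  thus "sunit q u" using wu unfolding sunit_def by blast
qed

end

section \<open>Matrices spanning the socle modulo \<sigma>^s\<close>

definition in_row_span :: "nat \<Rightarrow> nat \<Rightarrow> nat \<Rightarrow> 'k::field smat \<Rightarrow> (nat \<Rightarrow> 'k sser) \<Rightarrow> bool" where
  "in_row_span q m c B w \<longleftrightarrow> (\<exists>a. \<forall>k<c. w k = (\<Sum>r<m. smul q (a r) (B r k)))"

text \<open>\<sigma>^(s-1) K^c is the socle of (K[[\<sigma>]]/\<sigma>^s)^c; a matrix with c columns has rank c
  modulo \<sigma>^s exactly when its row span contains it.\<close>
definition spans_socle :: "nat \<Rightarrow> nat \<Rightarrow> nat \<Rightarrow> nat \<Rightarrow> 'k::field smat \<Rightarrow> bool" where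
  "spans_socle q m c s B \<longleftrightarrow> (\<forall>v::nat \<Rightarrow> 'k. \<exists>w. in_row_span q m c B w \<and>
     (\<forall>k<c. \<forall>n<s. w k n = (if n = s - 1 then v k else 0)))"

lemma in_row_span_cong: "in_row_span q m c B w \<Longrightarrow> (\<And>k. k < c \<Longrightarrow> w' k = w k) \<Longrightarrow> in_row_span q m c B w'"
  by (simp add: in_row_span_def)

context bijective_frobenius
begin

lemma in_row_span_row: "r < m \<Longrightarrow> in_row_span q m c (B::'k smat) (B r)"
  unfolding in_row_span_def
  by (intro exI[of _ "\<lambda>r'. if r' = r then sone else 0"]) (simp add: smul_if_zero_left)

lemma in_row_span_add:
  assumes "in_row_span q m c (B::'k smat) w" "in_row_span q m c B w'"
  shows "in_row_span q m c B (\<lambda>k. w k + w' k)"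
proof -
  obtain a a' where "\<forall>k<c. w k = (\<Sum>r<m. smul q (a r) (B r k))"
    "\<forall>k<c. w' k = (\<Sum>r<m. smul q (a' r) (B r k))"
    using assms unfolding in_row_span_def by blast
  thus ?thesis unfolding in_row_span_def
    by (intro exI[of _ "\<lambda>r. a r + a' r"]) (simp add: smul_add_left sum.distrib)
qed

lemma in_row_span_smul:
  assumes "in_row_span q m c (B::'k smat) w"
  shows "in_row_span q m c B (\<lambda>k. smul q x (w k))"
proof -
  obtain a where "\<forall>k<c. w k = (\<Sum>r<m. smul q (a r) (B r k))"
    using assms unfolding in_row_span_def by blast
  thus ?thesis unfolding in_row_span_def
    by (intro exI[of _ "\<lambda>r. smul q x (a r)"]) (simp add: smul_sum_right smul_assoc)
qed

lemma in_row_span_sum: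
  assumes "\<And>i. i \<in> A \<Longrightarrow> in_row_span q m c (B::'k smat) (f i)"
  shows "in_row_span q m c B (\<lambda>k. \<Sum>i\<in>A. f i k)"
  using assms
proof (induction A rule: infinite_finite_induct)
  case (insert x F)
  hence "in_row_span q m c B (\<lambda>k. f x k + (\<Sum>i\<in>F. f i k))"
    by (intro in_row_span_add) auto
  thus ?case by (simp only: sum.insert[OF insert(1,2)])
qed (auto simp: in_row_span_def intro!: exI[of _ "\<lambda>_. 0"])

lemma in_row_span_trans:
  assumes rows: "\<And>r. r < m \<Longrightarrow> in_row_span q m c B' (B r)"
    and w: "in_row_span q m c (B::'k smat) w"
  shows "in_row_span q m c B' w"
proof -
  obtain a where a: "\<forall>k<c. w k = (\<Sum>r<m. smul q (a r) (B r k))"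
    using w unfolding in_row_span_def by blast
  have "in_row_span q m c B' (\<lambda>k. \<Sum>r<m. smul q (a r) (B r k))"
    by (intro in_row_span_sum in_row_span_smul rows) simp
  thus ?thesis by (rule in_row_span_cong) (simp add: a)
qed

lemma spans_socle_if_rows_in_row_span:
  assumes "\<And>r. r < m \<Longrightarrow> in_row_span q m c B' (B r)" "spans_socle q m c s (B::'k smat)"
  shows "spans_socle q m c s B'"
  using assms in_row_span_trans unfolding spans_socle_def by metis

lemma spans_socle_row_add:
  assumes "spans_socle q m c s (B::'k smat)" "i < m" "j < m" "i \<noteq> j"
  shows "spans_socle q m c s (B(i := (\<lambda>k. sadd (B i k) (smul q x (B j k)))))"
    (is "spans_socle q m c s ?B'")
proof (rule spans_socle_if_rows_in_row_span[OF _ assms(1)])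
  fix r assume "r < m"
  have "in_row_span q m c ?B' (\<lambda>k. ?B' i k + smul q (- x) (?B' j k))"
    using assms by (intro in_row_span_add in_row_span_smul in_row_span_row)
  moreover have "?B' i k + smul q (- x) (?B' j k) = B i k" for k
    using assms by (simp add: sadd_def smul_minus_left fun_eq_iff)
  ultimately show "in_row_span q m c ?B' (B r)"
    using in_row_span_row[OF \<open>r < m\<close>, of c ?B'] by (cases "r = i") simp_all
qed

lemma spans_socle_row_swap:
  assumes "spans_socle q m c s (B::'k smat)" "i < m" "j < m"
  shows "spans_socle q m c s (B(i := B j, j := B i))"
proof (rule spans_socle_if_rows_in_row_span[OF _ assms(1)])
  fix r assume "r < m"
  thus "in_row_span q m c (B(i := B j, j := B i)) (B r)"
    using in_row_span_row[of i m c "B(i := B j, j := B i)"]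
      in_row_span_row[of j m c "B(i := B j, j := B i)"]
      in_row_span_row[of r m c "B(i := B j, j := B i)"] assms
    by (cases "r = i"; cases "r = j") simp_all
qed

lemma spans_socle_row_scale:
  assumes "spans_socle q m c s (B::'k smat)" "i < m" "sunit q u"
  shows "spans_socle q m c s (B(i := (\<lambda>k. smul q u (B i k))))"
    (is "spans_socle q m c s ?B'")
proof (rule spans_socle_if_rows_in_row_span[OF _ assms(1)])
  fix r assume "r < m"
  obtain u' where u': "smul q u' u = sone" using assms(3) unfolding sunit_def by blast
  have "in_row_span q m c ?B' (\<lambda>k. smul q u' (?B' i k))"
    using assms by (intro in_row_span_smul in_row_span_row)
  moreover have "smul q u' (?B' i k) = B i k" for k
    by (simp add: smul_assoc[symmetric] u')
  ultimately show "in_row_span q m c ?B' (B r)"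
    using in_row_span_row[OF \<open>r < m\<close>, of c ?B'] by (cases "r = i") simp_all
qed

lemma smul_socle_coeff:
  assumes "\<And>l. l < s \<Longrightarrow> w l = (if l = s - 1 then b else 0)" "n < s"
  shows "smul q w (x::'k sser) n = (if n = s - 1 then b * Finv (s - 1) (x 0) else 0)"
proof -
  have "smul q w x n = (\<Sum>l\<le>n. if l = s - 1 then b * Finv l (x (n - l)) else 0)"
    unfolding smul_def using assms by (intro sum.cong refl) auto
  thus ?thesis using assms(2) by auto
qed

text \<open>The last hypothesis says that E mod \<sigma>, twisted by Finv (s - 1), is surjective on K^c;
  each elementary column operation is such a right multiplication.\<close>
lemma spans_socle_col_transform:
  assumes socle: "spans_socle q m c s (B::'k smat)"
    and B': "\<And>r k. k < c \<Longrightarrow> B' r k = (\<Sum>l<c. smul q (B r l) (E l k))"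
    and surj: "\<And>v. \<exists>v'. \<forall>k<c. v k = (\<Sum>l<c. v' l * Finv (s - 1) (E l k 0))"
  shows "spans_socle q m c s B'"
  unfolding spans_socle_def
proof
  fix v
  obtain v' where v': "\<forall>k<c. v k = (\<Sum>l<c. v' l * Finv (s - 1) (E l k 0))"
    using surj by blast
  obtain w a where a: "\<forall>k<c. w k = (\<Sum>r<m. smul q (a r) (B r k))"
    and w: "\<forall>k<c. \<forall>n<s. w k n = (if n = s - 1 then v' k else 0)"
    using socle unfolding spans_socle_def in_row_span_def by metis
  define w' where "w' k = (\<Sum>l<c. smul q (w l) (E l k))" for k
  have "w' k = (\<Sum>r<m. smul q (a r) (B' r k))" if "k < c" for k
  proof -
    have "(\<Sum>r<m. smul q (a r) (B' r k)) = (\<Sum>l<c. \<Sum>r<m. smul q (smul q (a r) (B r l)) (E l k))"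
      using that by (simp add: B' smul_sum_right smul_assoc sum.swap[of _ "{..<m}"])
    also have "\<dots> = w' k" by (simp add: w'_def a smul_sum_left)
    finally show ?thesis ..
  qed
  hence "in_row_span q m c B' w'" unfolding in_row_span_def by blast
  moreover have "w' k n = (if n = s - 1 then v k else 0)" if "k < c" "n < s" for k n
  proof -
    have "smul q (w l) (E l k) n = (if n = s - 1 then v' l * Finv (s - 1) (E l k 0) else 0)"
      if "l < c" for l
      by (rule smul_socle_coeff) (use w that \<open>n < s\<close> in auto)
    thus ?thesis using v' \<open>k < c\<close> by (simp add: w'_def sum_fun_apply)
  qed
  ultimately show "\<exists>w. in_row_span q m c B' w
      \<and> (\<forall>k<c. \<forall>n<s. w k n = (if n = s - 1 then v k else 0))"
    by blast
qed

lemmas socle_coeff_simps = sone_def if_distribR if_distrib[of "Finv _"] if_distrib[of "(*) _"]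

lemma spans_socle_col_add:
  assumes "spans_socle q m c s (B::'k smat)" "i < c" "j < c" "i \<noteq> j"
  shows "spans_socle q m c s (\<lambda>r. (B r)(i := sadd (B r i) (smul q (B r j) x)))"
proof (rule spans_socle_col_transform[OF assms(1)])
  define E :: "'k smat"
    where "E l k = (if l = k then sone else 0) + (if l = j \<and> k = i then x else 0)" for l k
  show "((B r)(i := sadd (B r i) (smul q (B r j) x))) k = (\<Sum>l<c. smul q (B r l) (E l k))"
    if "k < c" for r k
    using assms that
    by (simp add: E_def sadd_eq_plus smul_add_right smul_if_zero_right sum.distrib)
  show "\<exists>v'. \<forall>k<c. v k = (\<Sum>l<c. v' l * Finv (s - 1) (E l k 0))" for v
    using assms
    by (intro exI[of _ "v(i := v i - v j * Finv (s - 1) (x 0))"])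
      (simp add: E_def socle_coeff_simps Finv_add distrib_left sum.distrib cong: if_cong)
qed

lemma spans_socle_col_swap:
  assumes "spans_socle q m c s (B::'k smat)" "i < c" "j < c"
  shows "spans_socle q m c s (\<lambda>r. (B r)(i := B r j, j := B r i))"
proof (rule spans_socle_col_transform[OF assms(1)])
  define E :: "'k smat"
    where "E l k = (if l = Transposition.transpose i j k then sone else 0)" for l k
  have t: "Transposition.transpose i j k < c" if "k < c" for k
    using assms that by (simp add: Transposition.transpose_def)
  show "((B r)(i := B r j, j := B r i)) k = (\<Sum>l<c. smul q (B r l) (E l k))"
    if "k < c" for r k
    using t[OF that] by (simp add: E_def smul_if_zero_right Transposition.transpose_def)
  show "\<exists>v'. \<forall>k<c. v k = (\<Sum>l<c. v' l * Finv (s - 1) (E l k 0))" for v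
    using t by (intro exI[of _ "v \<circ> Transposition.transpose i j"])
      (simp add: E_def socle_coeff_simps cong: if_cong)
qed

lemma spans_socle_col_scale:
  assumes "spans_socle q m c s (B::'k smat)" "i < c" "sunit q u"
  shows "spans_socle q m c s (\<lambda>r. (B r)(i := smul q (B r i) u))"
proof (rule spans_socle_col_transform[OF assms(1)])
  define E :: "'k smat" where "E l k = (if l = k then if k = i then u else sone else 0)" for l k
  show "((B r)(i := smul q (B r i) u)) k = (\<Sum>l<c. smul q (B r l) (E l k))"
    if "k < c" for r k
    using that by (simp add: E_def smul_if_zero_right)
  have "Finv (s - 1) (u 0) \<noteq> 0" using assms(3) by (simp add: sunit_iff)
  thus "\<exists>v'. \<forall>k<c. v k = (\<Sum>l<c. v' l * Finv (s - 1) (E l k 0))" for v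
    by (intro exI[of _ "v(i := v i / Finv (s - 1) (u 0))"])
      (simp add: E_def socle_coeff_simps cong: if_cong)
qed

lemma spans_socle_selem_reach:
  "selem_reach q m c A B \<Longrightarrow> spans_socle q m c s (A::'k smat) \<Longrightarrow> spans_socle q m c s B"
  by (induction rule: selem_reach.induct)
    (simp_all add: spans_socle_row_add spans_socle_row_swap spans_socle_row_scale
      spans_socle_col_add spans_socle_col_swap spans_socle_col_scale)

end

section \<open>Diagonalization by elementary operations\<close>

lemma selem_reach_trans:
  "selem_reach q m c B C \<Longrightarrow> selem_reach q m c A B \<Longrightarrow> selem_reach q m c A C"
  by (induction rule: selem_reach.induct) (auto intro: selem_reach.intros)

lemma selem_reach_add_row_multiples:
  assumes "finite R" "R \<subseteq> {..<m}" "t < m" "t \<notin> R"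
  shows "selem_reach q m c B (\<lambda>r. if r \<in> R then (\<lambda>k. sadd (B r k) (smul q (x r) (B t k))) else B r)"
  using assms
proof (induction R rule: finite_induct)
  case empty
  show ?case by (simp add: selem_reach.refl)
next
  case (insert r R)
  let ?C = "\<lambda>r. if r \<in> R then (\<lambda>k. sadd (B r k) (smul q (x r) (B t k))) else B r"
  have "selem_reach q m c B (?C(r := (\<lambda>k. sadd (?C r k) (smul q (x r) (?C t k)))))"
    using insert by (intro selem_reach.row_add) auto
  moreover have "?C(r := (\<lambda>k. sadd (?C r k) (smul q (x r) (?C t k))))
      = (\<lambda>r'. if r' \<in> insert r R then (\<lambda>k. sadd (B r' k) (smul q (x r') (B t k))) else B r')"
    using insert by (auto simp: fun_eq_iff)
  ultimately show ?case by simp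
qed

lemma selem_reach_add_col_multiples:
  assumes "finite R" "R \<subseteq> {..<c}" "t < c" "t \<notin> R"
  shows "selem_reach q m c B (\<lambda>r k. if k \<in> R then sadd (B r k) (smul q (B r t) (y k)) else B r k)"
  using assms
proof (induction R rule: finite_induct)
  case empty
  show ?case by (simp add: selem_reach.refl)
next
  case (insert k R)
  let ?C = "\<lambda>r k. if k \<in> R then sadd (B r k) (smul q (B r t) (y k)) else B r k"
  have "selem_reach q m c B (\<lambda>r. (?C r)(k := sadd (?C r k) (smul q (?C r t) (y k))))"
    using insert by (intro selem_reach.col_add) auto
  moreover have "(\<lambda>r. (?C r)(k := sadd (?C r k) (smul q (?C r t) (y k))))
      = (\<lambda>r k'. if k' \<in> insert k R then sadd (B r k') (smul q (B r t) (y k')) else B r k')"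
    using insert by (auto simp: fun_eq_iff)
  ultimately show ?case by simp
qed

definition pivot_cleared :: "nat \<Rightarrow> nat \<Rightarrow> nat \<Rightarrow> nat \<Rightarrow> 'k::field smat \<Rightarrow> 'k smat \<Rightarrow> bool" where
  "pivot_cleared m c t v B C \<longleftrightarrow> C t t = spow v \<and> (\<forall>k<c. k \<noteq> t \<longrightarrow> C t k = 0)
     \<and> (\<forall>r<m. r \<noteq> t \<longrightarrow> C r t = 0)
     \<and> (\<forall>r<m. \<forall>k<c. r \<noteq> t \<longrightarrow> k \<noteq> t \<longrightarrow> B r t = 0 \<or> B t k = 0 \<longrightarrow> C r k = B r k)"

lemma selem_reach_transpose:
  assumes "t < m" "i < m" "t < c" "j < c"
  shows "selem_reach q m c B
    (\<lambda>r k. B (Transposition.transpose t i r) (Transposition.transpose t j k))"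
proof -
  let ?B = "B(t := B i, i := B t)"
  have "selem_reach q m c B ?B"
    using assms by (intro selem_reach.row_swap[OF selem_reach.refl])
  from selem_reach.col_swap[OF this assms(3,4)]
  have "selem_reach q m c B (\<lambda>r. (?B r)(t := ?B r j, j := ?B r t))" .
  moreover have "(\<lambda>r. (?B r)(t := ?B r j, j := ?B r t))
      = (\<lambda>r k. B (Transposition.transpose t i r) (Transposition.transpose t j k))"
    by (auto simp: fun_eq_iff Transposition.transpose_def)
  ultimately show ?thesis by simp
qed

context bijective_frobenius
begin

lemma spow_right_factor: "(\<And>n. n < v \<Longrightarrow> e n = 0) \<Longrightarrow> smul q (\<lambda>n. e (n + v)) (spow v) = (e::'k sser)"
  by (auto simp: fun_eq_iff smul_spow_right)

lemma spow_left_factor: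
  "(\<And>n. n < v \<Longrightarrow> e n = 0) \<Longrightarrow> smul q (spow v) (\<lambda>n. e (n + v) ^ (q ^ v)) = (e::'k sser)"
  by (auto simp: fun_eq_iff smul_spow_left)

lemma clear_pivot_cross:
  assumes t: "t < m" "t < c" and pivot: "B t t = spow v"
    and col: "\<And>r n. r < m \<Longrightarrow> r \<noteq> t \<Longrightarrow> n < v \<Longrightarrow> B r t n = 0"
    and row: "\<And>k n. k < c \<Longrightarrow> k \<noteq> t \<Longrightarrow> n < v \<Longrightarrow> B t k n = (0::'k)"
  obtains C where "selem_reach q m c B C" "pivot_cleared m c t v B C"
proof -
  define x where "x r = - (\<lambda>n. B r t (n + v))" for r
  define B' where
    "B' = (\<lambda>r. if r \<in> {..<m} - {t} then (\<lambda>k. sadd (B r k) (smul q (x r) (B t k))) else B r)"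
  have reach': "selem_reach q m c B B'"
    unfolding B'_def using t by (intro selem_reach_add_row_multiples) auto
  have B'_col: "B' r t = 0" if "r < m" "r \<noteq> t" for r
    using that spow_right_factor[of v "B r t"] col
    by (simp add: B'_def x_def pivot sadd_eq_plus smul_minus_left)
  define y where "y k = - (\<lambda>n. B t k (n + v) ^ (q ^ v))" for k
  define C where
    "C = (\<lambda>r k. if k \<in> {..<c} - {t} then sadd (B' r k) (smul q (B' r t) (y k)) else B' r k)"
  have "selem_reach q m c B' C"
    unfolding C_def using t by (intro selem_reach_add_col_multiples) auto
  hence "selem_reach q m c B C" using reach' by (rule selem_reach_trans)
  moreover have "C t t = spow v" by (simp add: C_def B'_def pivot)
  moreover have "C t k = 0" if "k < c" "k \<noteq> t" for k
    using that spow_left_factor[of v "B t k"] row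
    by (simp add: C_def B'_def y_def pivot sadd_eq_plus smul_minus_right)
  moreover have "C r t = 0" if "r < m" "r \<noteq> t" for r
    using that B'_col by (simp add: C_def)
  moreover have "C r k = B r k"
    if "r < m" "k < c" "r \<noteq> t" "k \<noteq> t" "B r t = 0 \<or> B t k = 0" for r k
    using that B'_col
    by (auto simp: C_def B'_def x_def sadd_eq_plus smul_minus_left simp flip: zero_fun_def)
  ultimately show ?thesis using that unfolding pivot_cleared_def by blast
qed

lemma clear_pivot:
  assumes t: "t < m" "t < c" and pivot: "B t t v \<noteq> 0"
    and col: "\<And>r n. r < m \<Longrightarrow> n < v \<Longrightarrow> B r t n = 0"
    and row: "\<And>k n. k < c \<Longrightarrow> n < v \<Longrightarrow> B t k n = (0::'k)"
  obtains C where "selem_reach q m c B C" "pivot_cleared m c t v B C"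
proof -
  define u where "u = (\<lambda>n. B t t (n + v))"
  have Btt: "B t t = smul q u (spow v)"
    unfolding u_def using col t by (simp add: spow_right_factor)
  define u' where "u' = left_inverse u"
  have u'u: "smul q u' u = sone"
    unfolding u'_def using pivot by (intro smul_left_inverse) (simp add: u_def)
  hence "u' 0 * u 0 = 1" by (metis smul_apply_0 sone_def)
  hence "sunit q u'" by (auto simp: sunit_iff)
  define B' where "B' = B(t := (\<lambda>k. smul q u' (B t k)))"
  have reach': "selem_reach q m c B B'"
    unfolding B'_def using t \<open>sunit q u'\<close> by (intro selem_reach.row_scale[OF selem_reach.refl])
  have "B' t t = spow v" by (simp add: B'_def Btt u'u flip: smul_assoc)
  moreover have "B' t k n = 0" if "k < c" "n < v" for k n
    using that row by (simp add: B'_def smul_eq_0_if_low_right)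
  ultimately obtain C where "selem_reach q m c B' C" "pivot_cleared m c t v B' C"
    using clear_pivot_cross[OF t, of B' v] col by (auto simp: B'_def)
  moreover have "pivot_cleared m c t v B C"
    using \<open>pivot_cleared m c t v B' C\<close> unfolding pivot_cleared_def by (auto simp: B'_def)
  ultimately show ?thesis using reach' that selem_reach_trans by blast
qed

end

definition diagonal_upto :: "nat \<Rightarrow> nat \<Rightarrow> nat \<Rightarrow> nat \<Rightarrow> 'k::field smat \<Rightarrow> (nat \<Rightarrow> nat) \<Rightarrow> bool" where
  "diagonal_upto m c s t B \<nu> \<longleftrightarrow> (\<forall>i<t. B i i = spow (\<nu> i) \<and> \<nu> i < s
     \<and> (\<forall>k<c. k \<noteq> i \<longrightarrow> B i k = 0) \<and> (\<forall>r<m. r \<noteq> i \<longrightarrow> B r i = 0))"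

lemma transpose_lt_cases:
  fixes t i m r :: nat
  assumes "t \<le> i" "i < m" "r < m"
  shows "Transposition.transpose t i r < m" "r < t \<Longrightarrow> Transposition.transpose t i r = r"
    "i' < t \<Longrightarrow> Transposition.transpose t i r = i' \<longleftrightarrow> r = i'"
    "t \<le> r \<Longrightarrow> t \<le> Transposition.transpose t i r"
  using assms by (auto simp: Transposition.transpose_def)

lemma diagonal_upto_transpose:
  assumes "diagonal_upto m c s t B \<nu>" "t \<le> i" "i < m" "t \<le> j" "j < c"
  shows "diagonal_upto m c s t
    (\<lambda>r k. B (Transposition.transpose t i r) (Transposition.transpose t j k)) \<nu>"
  unfolding diagonal_upto_def
proof (intro allI impI conjI)
  fix i' assume i': "i' < t"
  let ?r = "Transposition.transpose t i" and ?k = "Transposition.transpose t j"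
  have i'_lt: "i' < m" "i' < c" using i' assms by simp_all
  have B: "B i' i' = spow (\<nu> i')" "\<nu> i' < s" "\<And>k. k < c \<Longrightarrow> k \<noteq> i' \<Longrightarrow> B i' k = 0"
    "\<And>r. r < m \<Longrightarrow> r \<noteq> i' \<Longrightarrow> B r i' = 0"
    using assms(1) i' unfolding diagonal_upto_def by auto
  show "B (?r i') (?k i') = spow (\<nu> i')" "\<nu> i' < s"
    using B(1,2) transpose_lt_cases(2)[OF assms(2,3) i'_lt(1) i']
      transpose_lt_cases(2)[OF assms(4,5) i'_lt(2) i']
    by simp_all
  show "B (?r i') (?k k) = 0" if "k < c" "k \<noteq> i'" for k
    using B(3) transpose_lt_cases[OF assms(4,5) that(1)]
      transpose_lt_cases(2)[OF assms(2,3) i'_lt(1) i'] that i'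
    by simp
  show "B (?r r) (?k i') = 0" if "r < m" "r \<noteq> i'" for r
    using B(4) transpose_lt_cases[OF assms(2,3) that(1)]
      transpose_lt_cases(2)[OF assms(4,5) i'_lt(2) i'] that i'
    by simp
qed

lemma diagonal_upto_Suc:
  assumes diag: "diagonal_upto m c s t B \<nu>" and t: "t < m" "t < c" "v < s"
    and cleared: "pivot_cleared m c t v B C"
  shows "diagonal_upto m c s (Suc t) C (\<nu>(t := v))"
  unfolding diagonal_upto_def
proof (intro allI impI)
  fix i assume "i < Suc t"
  note C = cleared[unfolded pivot_cleared_def]
  show "C i i = spow ((\<nu>(t := v)) i) \<and> (\<nu>(t := v)) i < s
    \<and> (\<forall>k<c. k \<noteq> i \<longrightarrow> C i k = 0) \<and> (\<forall>r<m. r \<noteq> i \<longrightarrow> C r i = 0)"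
  proof (cases "i = t")
    case False
    hence i: "i < t" using \<open>i < Suc t\<close> by simp
    have B: "B i i = spow (\<nu> i)" "\<nu> i < s" "\<forall>k<c. k \<noteq> i \<longrightarrow> B i k = 0"
      "\<forall>r<m. r \<noteq> i \<longrightarrow> B r i = 0"
      using diag i unfolding diagonal_upto_def by auto
    have i_lt: "i < m" "i < c" using i t by simp_all
    have "B i t = 0" "B t i = 0" using B(3,4) i t by auto
    have "C i k = 0" if "k < c" "k \<noteq> i" for k
      using C B(3) i_lt \<open>B i t = 0\<close> that False by (cases "k = t") auto
    moreover have "C r i = 0" if "r < m" "r \<noteq> i" for r
      using C B(4) i_lt \<open>B t i = 0\<close> that False by (cases "r = t") auto
    ultimately show ?thesis using C B(1,2) i_lt \<open>B i t = 0\<close> False by simp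
  qed (use t C in auto)
qed

context bijective_frobenius
begin

lemma spans_socle_column_nonzero:
  assumes "1 \<le> s" "spans_socle q m c s (B::'k smat)" "j < c"
  shows "\<exists>r<m. \<exists>n<s. B r j n \<noteq> 0"
proof (rule ccontr)
  assume zero: "\<not> (\<exists>r<m. \<exists>n<s. B r j n \<noteq> 0)"
  obtain w a where a: "\<forall>k<c. w k = (\<Sum>r<m. smul q (a r) (B r k))"
    and w: "\<forall>k<c. \<forall>n<s. w k n = (if n = s - 1 then 1 else 0)"
    using assms(2)[unfolded spans_socle_def, rule_format, of "\<lambda>_. 1"]
    unfolding in_row_span_def by blast
  have "w j (s - 1) = (\<Sum>r<m. smul q (a r) (B r j) (s - 1))"
    using a assms(3) by (simp add: sum_fun_apply)
  also have "\<dots> = 0"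
    using zero assms(1) by (intro sum.neutral ballI smul_eq_0_if_low_right) auto
  finally show False using w assms by simp
qed

lemma exists_pivot:
  assumes "1 \<le> s" "spans_socle q m c s (B::'k smat)" "t < c" "\<And>r. r < t \<Longrightarrow> B r t = 0"
  obtains v i j where "v < s" "t \<le> i" "i < m" "t \<le> j" "j < c" "B i j v \<noteq> 0"
    "\<And>i j n. t \<le> i \<Longrightarrow> i < m \<Longrightarrow> t \<le> j \<Longrightarrow> j < c \<Longrightarrow> n < v \<Longrightarrow> B i j n = 0"
proof -
  define P where "P n \<longleftrightarrow> (\<exists>i j. t \<le> i \<and> i < m \<and> t \<le> j \<and> j < c \<and> B i j n \<noteq> 0)" for n
  obtain r n where r: "r < m" "n < s" "B r t n \<noteq> 0"
    using spans_socle_column_nonzero[OF assms(1-3)] by blast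
  have "t \<le> r" using assms(4)[of r] r(3) by (cases "r < t") auto
  hence "P n" using r assms(3) unfolding P_def by blast
  define v where "v = (LEAST n. P n)"
  have "P v" unfolding v_def using \<open>P n\<close> by (rule LeastI)
  have "v \<le> n" unfolding v_def using \<open>P n\<close> by (rule Least_le)
  have "\<not> P n'" if "n' < v" for n' using that unfolding v_def by (rule not_less_Least)
  hence "B i j n' = 0" if "t \<le> i" "i < m" "t \<le> j" "j < c" "n' < v" for i j n'
    using that unfolding P_def by blast
  with \<open>P v\<close> \<open>v \<le> n\<close> \<open>n < s\<close> show ?thesis
    unfolding P_def using that[of v] by (meson le_less_trans)
qed

text \<open>The pivot is an entry of minimal valuation v in the lower right block; swapping it to
  position (t, t) makes every entry of row and column t divisible by \<sigma>^v.\<close>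
lemma diagonal_upto_extend:
  assumes s: "1 \<le> s" and socle: "spans_socle q m c s (B::'k smat)" and t: "t < c" "c \<le> m"
    and diag: "diagonal_upto m c s t B \<nu>"
  obtains C v where "selem_reach q m c B C" "diagonal_upto m c s (Suc t) C (\<nu>(t := v))"
proof -
  have "t < m" using t by simp
  have "B r t = 0" if "r < t" for r using diag that t unfolding diagonal_upto_def by auto
  then obtain v i j where v: "v < s" and ij: "t \<le> i" "i < m" "t \<le> j" "j < c" and piv: "B i j v \<noteq> 0"
    and low: "\<And>i j n. t \<le> i \<Longrightarrow> i < m \<Longrightarrow> t \<le> j \<Longrightarrow> j < c \<Longrightarrow> n < v \<Longrightarrow> B i j n = 0"
    using exists_pivot[OF s socle t(1)] by metis
  define B' where "B' = (\<lambda>r k. B (Transposition.transpose t i r) (Transposition.transpose t j k))"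
  have reach': "selem_reach q m c B B'"
    unfolding B'_def using \<open>t < m\<close> t ij by (intro selem_reach_transpose) auto
  have diag': "diagonal_upto m c s t B' \<nu>"
    unfolding B'_def using diag ij by (rule diagonal_upto_transpose)
  have col: "B' r t n = 0" if "r < m" "n < v" for r n
  proof (cases "r < t")
    case True thus ?thesis using diag' t unfolding diagonal_upto_def by auto
  next
    case False thus ?thesis
      using low transpose_lt_cases[OF ij(1,2) that(1)] that ij by (simp add: B'_def not_less)
  qed
  have row: "B' t k n = 0" if "k < c" "n < v" for k n
  proof (cases "k < t")
    case True thus ?thesis using diag' t unfolding diagonal_upto_def by auto
  next
    case False thus ?thesis
      using low transpose_lt_cases[OF ij(3,4) that(1)] that ij by (simp add: B'_def not_less)
  qed
  have "B' t t v \<noteq> 0" using piv by (simp add: B'_def)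
  then obtain C where "selem_reach q m c B' C" "pivot_cleared m c t v B' C"
    using clear_pivot[of t m c B' v, OF \<open>t < m\<close> t(1) _ col row] by blast
  thus ?thesis
    using that selem_reach_trans reach' diagonal_upto_Suc[OF diag' \<open>t < m\<close> t(1) v] by blast
qed

lemma diagonalize:
  assumes "1 \<le> s" "c \<le> m" "spans_socle q m c s (B::'k smat)" "diagonal_upto m c s t B \<nu>" "t \<le> c"
  shows "\<exists>C \<nu>'. selem_reach q m c B C \<and> diagonal_upto m c s c C \<nu>'"
  using assms(3-5)
proof (induction "c - t" arbitrary: B t \<nu>)
  case 0
  thus ?case using selem_reach.refl[of q m c B] by (intro exI) auto
next
  case (Suc x)
  have "t < c" using Suc.hyps(2) by simp
  then obtain C v where C: "selem_reach q m c B C" "diagonal_upto m c s (Suc t) C (\<nu>(t := v))"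
    using diagonal_upto_extend[OF assms(1) Suc.prems(1) _ assms(2) Suc.prems(2)] by blast
  moreover have "spans_socle q m c s C" using spans_socle_selem_reach[OF C(1) Suc.prems(1)] .
  ultimately have "\<exists>D \<nu>'. selem_reach q m c C D \<and> diagonal_upto m c s c D \<nu>'"
    using Suc.hyps(2) by (intro Suc.hyps(1)[of "Suc t" C]) auto
  thus ?case using selem_reach_trans C(1) by blast
qed

theorem rank_mod_sigma_if_spans_socle:
  assumes "1 \<le> s" "c \<le> m" "spans_socle q m c s (B::'k smat)"
  shows "rank_mod_sigma q m c B s c"
proof -
  obtain C \<nu> where C: "selem_reach q m c B C" "diagonal_upto m c s c C \<nu>"
    using diagonalize[OF assms, of 0 "\<lambda>_. 0"] by (auto simp: diagonal_upto_def)
  have "\<forall>i<m. \<forall>j<c. C i j = (if i = j then spow (\<nu> i) else szero)"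
    using C(2) unfolding diagonal_upto_def szero_def zero_fun_def[symmetric] by auto
  moreover have "{i. i < min m c \<and> \<nu> i < s} = {..<c}"
    using C(2) assms(2) unfolding diagonal_upto_def by auto
  ultimately show ?thesis unfolding rank_mod_sigma_def using C(1)
    by (intro exI[of _ C] exI[of _ \<nu>]) simp
qed

end

section \<open>From K{\<tau>} to K{\<sigma>}\<close>

lemma degree_tmult: "degree (tmult q f g) \<le> degree f + degree g"
  unfolding tmult_def
  by (intro degree_sum_le finite_atMost) (auto intro: order.trans[OF degree_monom_le])

lemma tmult_zero_left [simp]: "tmult q 0 g = 0"
  by (simp add: tmult_def)

lemma smult_sum_right: "Polynomial.smult a (sum f A) = (\<Sum>x\<in>A. Polynomial.smult a (f x))"
  by (induction A rule: infinite_finite_induct) (simp_all add: smult_add_right)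

lemma tmult_smult_left: "tmult q (Polynomial.smult a f) g = Polynomial.smult a (tmult q f g)"
  by (cases "a = 0") (simp_all add: tmult_def smult_sum_right smult_monom mult.assoc)

text \<open>\<sigma>^S f with its coefficients further twisted by Finv (T - S); the twist absorbs moving
  \<sigma>^S past coefficients in products (see sigma_shift_twist_mult).\<close>
definition sigma_shift_twist :: "nat \<Rightarrow> nat \<Rightarrow> nat \<Rightarrow> 'k::field poly \<Rightarrow> 'k sser" where
  "sigma_shift_twist q T S f =
     (\<lambda>n. if n \<le> S then (frobinv q ^^ T) (poly.coeff f (S - n)) else 0)"

lemma sigma_shift_eq_twist: "sigma_shift q s f = sigma_shift_twist q s s f"
  by (simp add: sigma_shift_def sigma_shift_twist_def)

context bijective_frobenius
begin

lemma tmult_eq_sum_bounded: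
  assumes "degree f \<le> A" "degree g \<le> B"
  shows "tmult q f (g::'k poly)
    = (\<Sum>i\<le>A. \<Sum>j\<le>B. Polynomial.monom (poly.coeff f i * poly.coeff g j ^ (q ^ i)) (i + j))"
    (is "_ = (\<Sum>i\<le>A. \<Sum>j\<le>B. ?t i j)")
proof -
  have "tmult q f g = (\<Sum>i\<le>degree f. \<Sum>j\<le>B. ?t i j)"
    unfolding tmult_def using assms q_pos
    by (intro sum.cong refl sum.mono_neutral_left) (auto simp: coeff_eq_0)
  also have "\<dots> = (\<Sum>i\<le>A. \<Sum>j\<le>B. ?t i j)"
    using assms by (intro sum.mono_neutral_left) (auto simp: coeff_eq_0)
  finally show ?thesis .
qed

lemma tmult_add_left: "tmult q (f + h) (g::'k poly) = tmult q f g + tmult q h g"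
proof -
  define A where "A = max (degree f) (degree h)"
  have "degree (f + h) \<le> A" "degree f \<le> A" "degree h \<le> A"
    unfolding A_def by (auto intro: degree_add_le)
  thus ?thesis
    by (simp add: tmult_eq_sum_bounded[where A = A and B = "degree g"] distrib_right
        add_monom[symmetric] sum.distrib)
qed

lemma tmult_sum_left: "tmult q (sum f A) (g::'k poly) = (\<Sum>x\<in>A. tmult q (f x) g)"
  by (induction A rule: infinite_finite_induct) (simp_all add: tmult_add_left)

lemma sigma_shift_twist_add:
  "sigma_shift_twist q T S (f + g)
   = sigma_shift_twist q T S f + sigma_shift_twist q T S (g::'k poly)"
  by (simp add: sigma_shift_twist_def fun_eq_iff Finv_add)

lemma sigma_shift_twist_sum:
  "sigma_shift_twist q T S (sum f A) = (\<Sum>x\<in>A. sigma_shift_twist q T S (f x :: 'k poly))"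
proof (induction A rule: infinite_finite_induct)
  case (insert x F)
  thus ?case by (simp only: sum.insert[OF insert(1,2)] sigma_shift_twist_add)
qed (simp_all add: sigma_shift_twist_def fun_eq_iff)

lemma sigma_shift_twist_monom:
  "i \<le> S \<Longrightarrow>
   sigma_shift_twist q T S (Polynomial.monom (a::'k) i) = (\<lambda>n. if n = S - i then Finv T a else 0)"
  by (auto simp: sigma_shift_twist_def fun_eq_iff)

lemma smul_single_coeff:
  "smul q (\<lambda>n. if n = p then x else 0) (\<lambda>n. if n = r then y else 0)
   = (\<lambda>n. if n = p + r then x * Finv p (y::'k) else 0)"
proof
  fix n
  have "smul q (\<lambda>n. if n = p then x else 0) (\<lambda>n. if n = r then y else 0) n
      = (\<Sum>l\<le>n. if l = p then x * Finv l (if n - l = r then y else 0) else 0)"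
    unfolding smul_def by (intro sum.cong refl) auto
  thus "smul q (\<lambda>n. if n = p then x else 0) (\<lambda>n. if n = r then y else 0) n
      = (if n = p + r then x * Finv p y else 0)"
    by auto
qed

lemma sigma_shift_twist_mult_monom:
  assumes "i \<le> S1" "j \<le> S2" "S1 \<le> T"
  shows "smul q (sigma_shift_twist q T S1 (Polynomial.monom (a::'k) i))
      (sigma_shift_twist q (T - S1) S2 (Polynomial.monom b j))
     = sigma_shift_twist q T (S1 + S2) (Polynomial.monom (a * b ^ (q ^ i)) (i + j))"
proof -
  have "T = (T - i) + i" using assms by simp
  hence "Finv T (b ^ (q ^ i)) = Finv (T - i) b"
    by (metis Finv_Finv Finv_power)
  hence "Finv (S1 - i) (Finv (T - S1) b) = Finv T (b ^ (q ^ i))"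
    using assms by (simp add: Finv_Finv)
  moreover have "S1 - i + (S2 - j) = S1 + S2 - (i + j)" using assms by simp
  ultimately show ?thesis
    using assms by (simp add: sigma_shift_twist_monom smul_single_coeff Finv_mult cong: if_cong)
qed

lemma sigma_shift_twist_mult:
  assumes "degree f \<le> S1" "degree g \<le> S2" "S1 \<le> T"
  shows "smul q (sigma_shift_twist q T S1 f) (sigma_shift_twist q (T - S1) S2 g)
    = sigma_shift_twist q T (S1 + S2) (tmult q f (g::'k poly))"
proof -
  have "smul q (sigma_shift_twist q T S1 f) (sigma_shift_twist q (T - S1) S2 g)
    = smul q (sigma_shift_twist q T S1 (\<Sum>i\<le>S1. Polynomial.monom (poly.coeff f i) i))
        (sigma_shift_twist q (T - S1) S2 (\<Sum>j\<le>S2. Polynomial.monom (poly.coeff g j) j))"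
    using assms by (simp add: poly_as_sum_of_monoms')
  also have "\<dots> = (\<Sum>i\<le>S1. \<Sum>j\<le>S2.
      smul q (sigma_shift_twist q T S1 (Polynomial.monom (poly.coeff f i) i))
        (sigma_shift_twist q (T - S1) S2 (Polynomial.monom (poly.coeff g j) j)))"
    by (simp add: sigma_shift_twist_sum smul_sum_left smul_sum_right sum.swap[where A = "{..S2}"])
  also have "\<dots> = sigma_shift_twist q T (S1 + S2) (tmult q f g)"
    using assms by (simp add: sigma_shift_twist_mult_monom sigma_shift_twist_sum
        tmult_eq_sum_bounded[where A = S1 and B = S2])
  finally show ?thesis .
qed

end

section \<open>Abelian t-modules\<close>

lemma sum_div_mod:
  fixes n d :: nat
  shows "(\<Sum>r<n * d. f (r div d) (r mod d)) = (\<Sum>k<n. \<Sum>i<d. f k i :: 'a::comm_monoid_add)"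
proof -
  have "(\<Sum>r\<in>{k * d..<k * d + d}. f (r div d) (r mod d)) = (\<Sum>i<d. f k i)" for k
  proof (rule sum.reindex_bij_witness[of _ "\<lambda>i. k * d + i" "\<lambda>r. r - k * d"])
    fix r assume "r \<in> {k * d..<k * d + d}"
    then obtain i where i: "r = k * d + i" "i < d" using le_iff_add by auto
    thus "k * d + (r - k * d) = r" "r - k * d \<in> {..<d}" "f k (r - k * d) = f (r div d) (r mod d)"
      by simp_all
  qed auto
  thus ?thesis by (simp flip: sum.nat_group)
qed

lemma degree_tmatpow_le_max_tdeg:
  assumes "1 \<le> k" "k \<le> n" "i < d" "j < d"
  shows "degree (tmatpow q d D k i j) \<le> max_tdeg q d D n"
proof -
  have "{degree (tmatpow q d D k i j) | k i j. 1 \<le> k \<and> k \<le> n \<and> i < d \<and> j < d}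
      \<subseteq> (\<lambda>(k, i, j). degree (tmatpow q d D k i j)) ` ({..n} \<times> {..<d} \<times> {..<d})"
  proof
    fix x assume "x \<in> {degree (tmatpow q d D k i j) | k i j. 1 \<le> k \<and> k \<le> n \<and> i < d \<and> j < d}"
    then obtain k i j where "x = degree (tmatpow q d D k i j)" "k \<le> n" "i < d" "j < d" by blast
    thus "x \<in> (\<lambda>(k, i, j). degree (tmatpow q d D k i j)) ` ({..n} \<times> {..<d} \<times> {..<d})"
      by (intro image_eqI[where x = "(k, i, j)"]) auto
  qed
  hence "finite {degree (tmatpow q d D k i j) | k i j. 1 \<le> k \<and> k \<le> n \<and> i < d \<and> j < d}"
    by (rule finite_subset) simp
  thus ?thesis unfolding max_tdeg_def using assms by (intro Max_ge) auto
qed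

context bijective_frobenius
begin

lemma degree_trowmul_le:
  assumes "\<And>i. i < d \<Longrightarrow> degree (b i) \<le> R" "\<And>i. i < d \<Longrightarrow> degree (M i l) \<le> S"
  shows "degree (trowmul q d b M l) \<le> R + (S::nat)"
  unfolding trowmul_def using assms
  by (intro degree_sum_le finite_lessThan order.trans[OF degree_tmult] add_mono) auto

lemma trowmul_smult_sum:
  "trowmul q d (\<lambda>i. \<Sum>g\<in>G. Polynomial.smult (a g) (x g i)) M j
   = (\<Sum>g\<in>G. Polynomial.smult (a g) (trowmul q d (x g) M (j::nat)) :: 'k poly)"
  unfolding trowmul_def
  by (simp add: tmult_sum_left tmult_smult_left smult_sum_right sum.swap[of _ G])

lemma is_abelian_expansion:
  assumes "is_abelian q d (D::'k tmat)"
  obtains R where "\<And>m. \<exists>N b. (\<forall>k. \<forall>i<d. degree (b k i) \<le> R)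
    \<and> (\<forall>j<d. m j = (\<Sum>k<N. trowmul q d (b k) (tmatpow q d D k) j))"
proof -
  obtain gens :: "(nat \<Rightarrow> 'k poly) list" where gens: "\<forall>m. \<exists>N c. \<forall>j<d. m j
      = (\<Sum>g<length gens. \<Sum>k<N. tmotive_scal (c g k) (trowmul q d (gens ! g) (tmatpow q d D k)) j)"
    using assms unfolding is_abelian_def by blast
  define R where "R = (\<Sum>g<length gens. \<Sum>i<d. degree ((gens ! g) i))"
  have deg: "degree ((gens ! g) i) \<le> R" if "g < length gens" "i < d" for g i
  proof -
    have "degree ((gens ! g) i) \<le> (\<Sum>i<d. degree ((gens ! g) i))"
      using that by (intro member_le_sum) auto
    also have "\<dots> \<le> R" unfolding R_def using that by (intro member_le_sum) auto
    finally show ?thesis .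
  qed
  show ?thesis
  proof (rule that)
    fix m :: "nat \<Rightarrow> 'k poly"
    obtain N c where m: "\<forall>j<d. m j
        = (\<Sum>g<length gens. \<Sum>k<N. tmotive_scal (c g k) (trowmul q d (gens ! g) (tmatpow q d D k)) j)"
      using gens by blast
    define b where "b k = (\<lambda>i. \<Sum>g<length gens. Polynomial.smult (c g k) ((gens ! g) i))" for k
    have "degree (b k i) \<le> R" if "i < d" for k i
      unfolding b_def using deg that
      by (intro degree_sum_le finite_lessThan order.trans[OF degree_smult_le]) auto
    moreover have "m j = (\<Sum>k<N. trowmul q d (b k) (tmatpow q d D k) j)" if "j < d" for j
      using m that by (simp add: b_def trowmul_smult_sum tmotive_scal_def sum.swap[of _ "{..<N}"])
    ultimately show "\<exists>N b. (\<forall>k. \<forall>i<d. degree (b k i) \<le> R)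
        \<and> (\<forall>j<d. m j = (\<Sum>k<N. trowmul q d (b k) (tmatpow q d D k) j))"
      by blast
  qed
qed

lemma sum_smult_expansions:
  fixes N :: "nat \<Rightarrow> nat"
  assumes "\<And>j. j < d \<Longrightarrow> N j \<le> n"
    and "\<And>j. j < d \<Longrightarrow> e j = (\<Sum>k<N j. trowmul q d (b j k) (M k) l)"
  shows "(\<Sum>j<d. Polynomial.smult (c j) (e j)) = (\<Sum>k\<le>n. trowmul q d
    (\<lambda>i. \<Sum>j<d. Polynomial.smult (if k < N j then c j else 0) (b j k i)) (M k) (l::nat) :: 'k poly)"
proof -
  have "Polynomial.smult (c j) (e j)
      = (\<Sum>k\<le>n. Polynomial.smult (if k < N j then c j else 0) (trowmul q d (b j k) (M k) l))"
    if "j < d" for j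
  proof -
    have "{..<N j} \<subseteq> {..n}" using assms(1)[OF that] by (simp add: subset_eq)
    thus ?thesis using assms(2)[OF that]
      by (simp add: smult_sum_right, intro sum.mono_neutral_cong_left) auto
  qed
  thus ?thesis by (simp add: trowmul_smult_sum sum.swap[of _ "{..n}"])
qed

text \<open>Finite generation of the t-motive, applied to the rows \<tau>^(R+1) e_j, yields one
  expansion length n for all of them, and then by linearity for every K-multiple of \<tau>^(R+1).\<close>
lemma tau_power_expansion:
  assumes "is_abelian q d (D::'k tmat)"
  obtains R n where "1 \<le> n" "\<And>c. \<exists>b. (\<forall>k. \<forall>i<d. degree (b k i) \<le> R) \<and> (\<forall>l<d.
    Polynomial.monom (c l) (Suc R) = (\<Sum>k\<le>n. trowmul q d (b k) (tmatpow q d D k) l))"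
proof -
  obtain R where R: "\<And>m. \<exists>N b. (\<forall>k. \<forall>i<d. degree (b k i) \<le> R)
      \<and> (\<forall>j<d. m j = (\<Sum>k<N. trowmul q d (b k) (tmatpow q d D k) j))"
    using is_abelian_expansion[OF assms] by blast
  let ?e = "\<lambda>j l. if l = j then Polynomial.monom 1 (Suc R) else (0::'k poly)"
  have "\<forall>j. \<exists>N b. (\<forall>k. \<forall>i<d. degree (b k i) \<le> R)
      \<and> (\<forall>l<d. ?e j l = (\<Sum>k<N. trowmul q d (b k) (tmatpow q d D k) l))"
    by (intro allI R)
  then obtain N where "\<forall>j. \<exists>b. (\<forall>k. \<forall>i<d. degree (b k i) \<le> R)
      \<and> (\<forall>l<d. ?e j l = (\<Sum>k<N j. trowmul q d (b k) (tmatpow q d D k) l))"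
    by (rule choice[THEN exE])
  then obtain b where "\<forall>j. (\<forall>k. \<forall>i<d. degree (b j k i) \<le> R)
      \<and> (\<forall>l<d. ?e j l = (\<Sum>k<N j. trowmul q d (b j k) (tmatpow q d D k) l))"
    by (rule choice[THEN exE])
  hence deg: "\<And>j k i. i < d \<Longrightarrow> degree (b j k i) \<le> R"
    and e: "\<And>j l. l < d \<Longrightarrow> ?e j l = (\<Sum>k<N j. trowmul q d (b j k) (tmatpow q d D k) l)"
    by blast+
  define n where "n = Suc (\<Sum>j<d. N j)"
  have N_le: "N j \<le> n" if "j < d" for j
    using member_le_sum[of j "{..<d}" N] that by (simp add: n_def)
  show ?thesis
  proof (rule that)
    show "1 \<le> n" by (simp add: n_def)
    fix c :: "nat \<Rightarrow> 'k"
    define b' where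
      "b' k = (\<lambda>i. \<Sum>j<d. Polynomial.smult (if k < N j then c j else 0) (b j k i))" for k
    have "degree (b' k i) \<le> R" if "i < d" for k i
      unfolding b'_def using deg that
      by (intro degree_sum_le finite_lessThan order.trans[OF degree_smult_le]) auto
    moreover have "Polynomial.monom (c l) (Suc R) = (\<Sum>k\<le>n. trowmul q d (b' k) (tmatpow q d D k) l)"
      if "l < d" for l
    proof -
      have "Polynomial.monom (c l) (Suc R) = (\<Sum>j<d. Polynomial.smult (c j) (?e j l))"
        using that by (simp add: smult_monom if_distrib[of "Polynomial.smult _"] cong: if_cong)
      also have "\<dots> = (\<Sum>k\<le>n. trowmul q d (b' k) (tmatpow q d D k) l)"
        unfolding b'_def using N_le e[OF that] by (rule sum_smult_expansions)
      finally show ?thesis .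
    qed
    ultimately show "\<exists>b. (\<forall>k. \<forall>i<d. degree (b k i) \<le> R) \<and> (\<forall>l<d.
        Polynomial.monom (c l) (Suc R) = (\<Sum>k\<le>n. trowmul q d (b k) (tmatpow q d D k) l))"
      by blast
  qed
qed

lemma tmult_zero_right [simp]: "tmult q f (0::'k poly) = 0"
  using q_pos by (simp add: tmult_def power_0_left)

lemma tmult_one_right [simp]: "tmult q f (1::'k poly) = f"
  by (simp add: tmult_def poly_as_sum_of_monoms)

lemma sum_trowmul_tmatpow_atMost:
  "l < d \<Longrightarrow> (\<Sum>k\<le>n. trowmul q d (b k) (tmatpow q d D k) l)
    = b 0 l + (\<Sum>k<n. trowmul q d (b (Suc k)) (tmatpow q d D (Suc k)) l :: 'k poly)"
  by (simp add: sum.atMost_shift trowmul_def tmat_one_def if_distrib[of "tmult q _"]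
      del: tmatpow.simps(2) cong: if_cong)

lemma one_le_max_tdeg:
  assumes "0 < d" "\<And>k i. i < d \<Longrightarrow> degree (b k i) \<le> R"
    and "Polynomial.monom (1::'k) (Suc R) = (\<Sum>k\<le>n. trowmul q d (b k) (tmatpow q d D k) 0)"
  shows "1 \<le> max_tdeg q d D n"
proof (rule ccontr)
  assume "\<not> 1 \<le> max_tdeg q d D n"
  hence "degree (tmatpow q d D (Suc k) i 0) \<le> 0" if "k < n" "i < d" for k i
    using degree_tmatpow_le_max_tdeg[of "Suc k" n i d 0 q D] that assms(1)
    by (simp del: tmatpow.simps)
  hence "degree (trowmul q d (b (Suc k)) (tmatpow q d D (Suc k)) 0) \<le> R + 0" if "k < n" for k
    using assms(2) that by (intro degree_trowmul_le) auto
  hence "degree (Polynomial.monom (1::'k) (Suc R)) \<le> R"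
    unfolding assms(3) sum_trowmul_tmatpow_atMost[OF assms(1)] using assms(1,2)
    by (intro degree_add_le degree_sum_le) auto
  thus False by (simp add: degree_monom_eq)
qed

lemma block_col_row_combination:
  fixes D :: "'k tmat"
  assumes "\<And>k i. 1 \<le> k \<Longrightarrow> k \<le> n \<Longrightarrow> i < d \<Longrightarrow> degree (tmatpow q d D k i l) \<le> s"
    and "\<And>k i. i < d \<Longrightarrow> degree (b k i) \<le> R"
  shows "(\<Sum>r<n * d. smul q (sigma_shift_twist q (s + R) R (b (r div d + 1) (r mod d)))
      (block_col q d D n s r l))
    = sigma_shift_twist q (s + R) (R + s) (\<Sum>k<n. trowmul q d (b (Suc k)) (tmatpow q d D (Suc k)) l)"
proof -
  let ?D = "\<lambda>k i. tmatpow q d D (Suc k) i l"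
  let ?a = "\<lambda>k i. sigma_shift_twist q (s + R) R (b (Suc k) i)"
  have "smul q (?a k i) (sigma_shift q s (?D k i))
      = sigma_shift_twist q (s + R) (R + s) (tmult q (b (Suc k) i) (?D k i))"
    if "k < n" "i < d" for k i
  proof -
    have "degree (?D k i) \<le> s" by (rule assms(1)) (use that in auto)
    from sigma_shift_twist_mult[OF assms(2)[OF that(2)] this, of "s + R"]
    show ?thesis by (simp add: sigma_shift_eq_twist)
  qed
  hence "(\<Sum>k<n. \<Sum>i<d. smul q (?a k i) (sigma_shift q s (?D k i)))
      = sigma_shift_twist q (s + R) (R + s) (\<Sum>k<n. \<Sum>i<d. tmult q (b (Suc k) i) (?D k i))"
    by (simp add: sigma_shift_twist_sum)
  thus ?thesis
    unfolding block_col_def trowmul_def Suc_eq_plus1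
    using sum_div_mod[where n = n and d = d
        and f = "\<lambda>k i. smul q (?a k i) (sigma_shift q s (?D k i))"]
    by (simp del: tmatpow.simps)
qed

lemma spans_socle_block_col_if_expansion:
  fixes D :: "'k tmat"
  assumes s: "1 \<le> s" "\<And>k i l. 1 \<le> k \<Longrightarrow> k \<le> n \<Longrightarrow> i < d \<Longrightarrow> l < d \<Longrightarrow> degree (tmatpow q d D k i l) \<le> s"
    and expansion: "\<And>c. \<exists>b. (\<forall>k. \<forall>i<d. degree (b k i) \<le> R) \<and> (\<forall>l<d.
      Polynomial.monom (c l) (Suc R) = (\<Sum>k\<le>n. trowmul q d (b k) (tmatpow q d D k) l))"
  shows "spans_socle q (n * d) d s (block_col q d D n s)"
  unfolding spans_socle_def
proof
  fix v :: "nat \<Rightarrow> 'k"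
  define c where "c l = v l ^ q ^ (s + R)" for l
  obtain b where deg: "\<forall>k. \<forall>i<d. degree (b k i) \<le> R" and b: "\<forall>l<d. Polynomial.monom (c l) (Suc R)
      = (\<Sum>k\<le>n. trowmul q d (b k) (tmatpow q d D k) l)"
    using expansion by blast
  define w where
    "w l = sigma_shift_twist q (s + R) (R + s) (Polynomial.monom (c l) (Suc R) - b 0 l)" for l
  have "in_row_span q (n * d) d (block_col q d D n s) w"
    unfolding in_row_span_def
  proof (intro exI allI impI)
    fix l assume "l < d"
    thus "w l = (\<Sum>r<n * d. smul q (sigma_shift_twist q (s + R) R (b (r div d + 1) (r mod d)))
        (block_col q d D n s r l))"
      using b deg s(2) unfolding w_def
      by (subst block_col_row_combination) (auto simp: sum_trowmul_tmatpow_atMost)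
  qed
  moreover have "w l n' = (if n' = s - 1 then v l else 0)" if "l < d" "n' < s" for l n'
  proof -
    have "degree (b 0 l) \<le> R" using deg that by simp
    hence "poly.coeff (b 0 l) (R + s - n') = 0" using that by (intro coeff_eq_0) linarith
    thus ?thesis using that s(1) by (auto simp: w_def c_def sigma_shift_twist_def)
  qed
  ultimately show "\<exists>w. in_row_span q (n * d) d (block_col q d D n s) w
      \<and> (\<forall>k<d. \<forall>n<s. w k n = (if n = s - 1 then v k else 0))"
    by blast
qed

lemma spans_socle_block_col:
  assumes "is_abelian q d (D::'k tmat)" "0 < d"
  obtains n where "1 \<le> n" "1 \<le> max_tdeg q d D n"
    "spans_socle q (n * d) d (max_tdeg q d D n) (block_col q d D n (max_tdeg q d D n))"
proof -
  obtain R n where n: "1 \<le> n" and expansion: "\<And>c. \<exists>b. (\<forall>k. \<forall>i<d. degree (b k i) \<le> R) \<and> (\<forall>l<d.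
      Polynomial.monom (c l) (Suc R) = (\<Sum>k\<le>n. trowmul q d (b k) (tmatpow q d D k) l))"
    by (rule tau_power_expansion[OF assms(1)]) blast
  have "1 \<le> max_tdeg q d D n"
    using expansion[of "\<lambda>_. 1"] assms(2) one_le_max_tdeg[OF assms(2)] by blast
  moreover have "spans_socle q (n * d) d (max_tdeg q d D n) (block_col q d D n (max_tdeg q d D n))"
    using calculation degree_tmatpow_le_max_tdeg expansion
    by (rule spans_socle_block_col_if_expansion)
  ultimately show ?thesis using n that by blast
qed

end

theorem proposition6p4:
  fixes q :: nat and Fq :: "'k::field set" and \<theta> :: 'k
    and d :: nat and D :: "'k tmat"
  assumes "is_subfield Fq" and "finite Fq" and "card Fq = q"
    and "perfect_field TYPE('k)"
    and "is_tmodule \<theta> d D"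
    and "is_abelian q d D"
  shows "\<exists>n\<ge>1. rank_mod_sigma q (n * d) d (block_col q d D n (max_tdeg q d D n))
                   (max_tdeg q d D n) d"
proof (cases "d = 0")
  case True
  hence "rank_mod_sigma q (1 * d) d B (max_tdeg q d D 1) d" for B :: "'k smat"
    unfolding rank_mod_sigma_def
    by (intro exI[of _ B] exI[of _ "\<lambda>_. 0"]) (simp add: selem_reach.refl)
  thus ?thesis by blast
next
  case False
  have frob: "bijective_frobenius TYPE('k) q"
    using assms(1-4) by (rule bijective_frobenius_if_finite_subfield)
  obtain n where "1 \<le> n" "1 \<le> max_tdeg q d D n"
    "spans_socle q (n * d) d (max_tdeg q d D n) (block_col q d D n (max_tdeg q d D n))"
    using bijective_frobenius.spans_socle_block_col[OF frob assms(6)] False by blast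
  thus ?thesis using bijective_frobenius.rank_mod_sigma_if_spans_socle[OF frob] by auto
qed

end
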